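(* Let $N$ be a positive even integer and let $\sigma\colon\{0,1\}^*\to\{0,1,\#\}^*$ be the substitution defined by $\sigma(0)=\#0^{N-1}$ and $\sigma(1)=\#1^{N-1}$. Let $\mathbf{w}$ be an infinite binary word. If an abelian power $u_0\cdots u_{e-1}$ with $e\ge N$ occurs in $\sigma(\mathbf{w})$, then $N$ divides $|u_0|$.
   Context: Two finite words $u,v$ are abelian equivalent, written $u\sim v$, if they are permutations of each other. An abelian power of exponent $e$ (a positive integer) and period $m$ is a word of the form $u_0u_1\cdots u_{e-1}$ where $u_0,\dots,u_{e-1}$ are nonempty, pairwise abelian equivalent, and $m=|u_0|$. The image $\sigma(\mathbf{w})$ of an infinite word is obtained by applying $\sigma$ letter by letter. *)

theory Defs
  imports Main "HOL-Library.Multiset"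
begin

datatype letter = Zero | One | Hash

definition abel_equiv :: "'a list \<Rightarrow> 'a list \<Rightarrow> bool" where
  "abel_equiv u v \<longleftrightarrow> mset u = mset v"

definition abelian_power :: "'a list list \<Rightarrow> nat \<Rightarrow> bool" where
  "abelian_power us e \<longleftrightarrow> length us = e \<and> e \<ge> 1 \<and> (\<forall>u\<in>set us. u \<noteq> []) \<and>
     (\<forall>i<e. \<forall>j<e. abel_equiv (us ! i) (us ! j))"

definition occurs_in :: "'a list \<Rightarrow> (nat \<Rightarrow> 'a) \<Rightarrow> bool" where
  "occurs_in x s \<longleftrightarrow> (\<exists>i. x = map s [i..<i + length x])"

text \<open>The substitution sigma on letters: 0 \<mapsto> # 0^(N-1), 1 \<mapsto> # 1^(N-1).
  Binary letters are encoded as bool (False = 0, True = 1).\<close>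
definition sigma :: "nat \<Rightarrow> bool \<Rightarrow> letter list" where
  "sigma N b = Hash # replicate (N - 1) (if b then One else Zero)"

text \<open>Image of an infinite word by applying a substitution letter by letter
  (concatenation of the images), for substitutions whose images are nonempty.\<close>
definition subst_inf :: "('a \<Rightarrow> 'b list) \<Rightarrow> (nat \<Rightarrow> 'a) \<Rightarrow> nat \<Rightarrow> 'b" where
  "subst_inf f w n = (let k = (LEAST k. n < (\<Sum>j\<le>k. length (f (w j))))
                      in f (w k) ! (n - (\<Sum>j<k. length (f (w j)))))"

end

theory Submission
  imports Defs
begin

text \<open>Every image \<open>\<sigma>(b)\<close> has length \<open>N\<close> and starts with \<open>#\<close>, so in \<open>\<sigma>(w)\<close> the
  letter \<open>#\<close> sits exactly at the positions divisible by \<open>N\<close>, and any factor of length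
  \<open>N m\<close> contains exactly \<open>m\<close> letters \<open>#\<close>. The first \<open>N\<close> blocks u_0 ... u_{N-1}
  form such a factor with \<open>m = |u_0|\<close>; being abelian equivalent, each of them contains the
  same number \<open>c\<close> of letters \<open>#\<close>, whence \<open>|u_0| = N c\<close>.\<close>

lemma subst_inf_uniform:
  assumes "N > 0" and "\<And>a. length (f a) = N"
  shows "subst_inf f w n = f (w (n div N)) ! (n mod N)"
proof -
  have "(LEAST k. n < (\<Sum>j\<le>k. length (f (w j)))) = n div N"
  proof (rule Least_equality)
    show "n < (\<Sum>j\<le>n div N. length (f (w j)))"
      using assms by simp (metis dividend_less_div_times)
  next
    fix k assume "n < (\<Sum>j\<le>k. length (f (w j)))"
    then have "n < Suc k * N" using assms(2) by simp
    then show "n div N \<le> k" by (metis less_Suc_eq_le less_mult_imp_div_less)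
  qed
  moreover have "(\<Sum>j<n div N. length (f (w j))) = n div N * N" using assms(2) by simp
  ultimately show ?thesis by (simp add: subst_inf_def minus_div_mult_eq_mod)
qed

lemma subst_inf_sigma_eq_Hash_iff:
  assumes "N > 0"
  shows "subst_inf (sigma N) w n = Hash \<longleftrightarrow> N dvd n"
proof -
  have "subst_inf (sigma N) w n = sigma N (w (n div N)) ! (n mod N)"
    using assms by (intro subst_inf_uniform) (auto simp: sigma_def)
  moreover have "n mod N < N" using assms by simp
  ultimately show ?thesis by (cases "n mod N") (auto simp: sigma_def dvd_eq_mod_eq_0)
qed

lemma length_filter_dvd_upt_add:
  assumes "N > 0"
  shows "length (filter (\<lambda>n. N dvd n) [a..<a + N]) = 1"
proof (induction a)
  case 0
  have "[0..<N] = 0 # [1..<N]" using assms by (simp add: upt_rec)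
  moreover have "filter (\<lambda>n. N dvd n) [1..<N] = []"
    by (auto simp: filter_empty_conv dest: dvd_imp_le)
  ultimately show ?case by simp
next
  case (Suc a)
  let ?count = "\<lambda>xs. length (filter (\<lambda>n. N dvd n) xs)"
  have "[a..<a + N] = a # [Suc a..<a + N]" using assms by (simp add: upt_rec)
  then have "?count [a..<a + N] = ?count [a] + ?count [Suc a..<a + N]" by simp
  moreover have "[Suc a..<Suc a + N] = [Suc a..<a + N] @ [a + N]" using assms by simp
  then have "?count [Suc a..<Suc a + N] = ?count [Suc a..<a + N] + ?count [a + N]" by simp
  moreover have "?count [a + N] = ?count [a]" by simp
  ultimately show ?case using Suc.IH by linarith
qed

lemma length_filter_dvd_upt_add_mult:
  assumes "N > 0"
  shows "length (filter (\<lambda>n. N dvd n) [a..<a + N * m]) = m"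
proof (induction m)
  case (Suc m)
  have "[a..<a + N * m + N] = [a..<a + N * m] @ [a + N * m..<a + N * m + N]"
    by (rule upt_add_eq_append) simp
  then show ?case
    using Suc.IH length_filter_dvd_upt_add[OF assms, of "a + N * m"]
    by (simp add: add.assoc add.commute[of N])
qed simp

lemma abelian_power_length_filter_concat_take:
  assumes "abelian_power us e" and "k \<le> e"
  shows "length (filter P (concat (take k us))) = k * length (filter P (hd us))"
proof -
  have length_us: "length us = e" and "e \<ge> 1"
    and equiv: "\<forall>i<e. \<forall>j<e. abel_equiv (us ! i) (us ! j)"
    using assms(1) unfolding abelian_power_def by auto
  have "length (filter P x) = length (filter P (hd us))" if x_in: "x \<in> set (take k us)" for x
  proof -
    obtain i where "i < e" "x = us ! i"
      using in_set_takeD[OF x_in] length_us by (auto simp: in_set_conv_nth)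
    moreover have "hd us = us ! 0"
      using \<open>e \<ge> 1\<close> length_us by (cases us) auto
    ultimately have "abel_equiv x (hd us)"
      using equiv \<open>e \<ge> 1\<close> by simp
    then show ?thesis unfolding abel_equiv_def by (metis mset_filter size_mset)
  qed
  then have "sum_list (map (length \<circ> filter P) (take k us))
      = length (take k us) * length (filter P (hd us))"
    by (simp add: sum_list_triv cong: map_cong)
  then show ?thesis
    using assms(2) length_us by (simp add: filter_concat length_concat)
qed

lemma occurs_in_appendD:
  assumes "occurs_in (x @ y) s"
  shows "occurs_in x s"
proof -
  obtain p where "x @ y = map s [p..<p + length (x @ y)]"
    using assms unfolding occurs_in_def by blast
  then have "x = take (length x) (map s [p..<p + length (x @ y)])"
    by (metis append_eq_conv_conj)
  then show ?thesis unfolding occurs_in_def by (auto simp: take_map)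
qed

theorem lemma2:
  fixes N :: nat and w :: "nat \<Rightarrow> bool" and us :: "letter list list" and e :: nat
  assumes "N > 0" and "even N"
    and "abelian_power us e" and "e \<ge> N"
    and "occurs_in (concat us) (subst_inf (sigma N) w)"
  shows "N dvd length (hd us)"
proof -
  define v where "v = concat (take N us)"
  define m where "m = length (hd us)"
  have length_v: "length v = N * m"
    using abelian_power_length_filter_concat_take[OF assms(3,4), of "\<lambda>_. True"]
    by (simp add: v_def m_def)
  have Hash_v: "length (filter ((=) Hash) v) = N * length (filter ((=) Hash) (hd us))"
    using abelian_power_length_filter_concat_take[OF assms(3,4)] by (simp add: v_def)
  have "concat us = v @ concat (drop N us)"
    unfolding v_def by (simp flip: concat_append)
  then have "occurs_in v (subst_inf (sigma N) w)"
    using assms(5) by (metis occurs_in_appendD)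
  then obtain p where "v = map (subst_inf (sigma N) w) [p..<p + N * m]"
    unfolding occurs_in_def length_v by blast
  then have "length (filter ((=) Hash) v) = length (filter (\<lambda>n. N dvd n) [p..<p + N * m])"
    using subst_inf_sigma_eq_Hash_iff[OF assms(1), of w]
    by (simp add: filter_map comp_def flip: eq_commute[of Hash])
  also have "\<dots> = m" using length_filter_dvd_upt_add_mult[OF assms(1)] .
  finally have "m = N * length (filter ((=) Hash) (hd us))" using Hash_v by simp
  then show ?thesis unfolding m_def by simp
qed

end
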